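(* Let $\{\xi_j\}$ be an orthonormal basis of internal states and let $$|\psi\rangle=\hat a_0^\dagger[\xi_{i_0}]\cdots\hat a_{n-1}^\dagger[\xi_{i_{n-1}}]|\vec0\rangle$$ be an input state of $n$ photons in $n$ modes (one per mode) such that for some $r$, $\langle\xi_{i_r}|\xi_{i_j}\rangle=0$ for all $j\ne r$. Then the probability that the $n$-mode Fourier interferometer $F_n$ applied to $|\psi\rangle$, followed by photon-number-resolving detection on all $n$ output modes (insensitive to internal states), yields a valid pattern is exactly $1/n$.
   Context: $\hat a_i^\dagger[\xi]$ creates a photon in external mode $i\in\{0,\dots,n-1\}$ with internal state $\xi$. The Fourier interferometer acts on external modes only: $\hat a_r^\dagger[\xi]\mapsto\frac1{\sqrt n}\sum_{j=0}^{n-1}\omega^{-rj}\hat a_j^\dagger[\xi]$ with $\omega=e^{2\pi i/n}$. A measured occupation pattern $(s_0,\dots,s_{n-1})$ ($s_i$ = number of photons in mode $i$) is valid if $\sum_{i=0}^{n-1}i\,s_i\equiv0\pmod n$. *)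

theory Defs
  imports "HOL-Analysis.Analysis" "HOL-Combinatorics.Permutations"
begin

text \<open>Photon configurations: photon j (created in input mode j) is sent to output
  mode f j.  Such assignments f range over the finite set below.\<close>
definition assignments :: "nat \<Rightarrow> (nat \<Rightarrow> nat) set" where
  "assignments n = ({0..<n} \<rightarrow>\<^sub>E {0..<n})"

definition fourier_phase :: "nat \<Rightarrow> nat \<Rightarrow> nat \<Rightarrow> complex" where
  "fourier_phase n r j = cis (- 2 * pi * real (r * j) / real n)"

text \<open>Coefficient of the monomial prod_j a^dagger_{f j}[xi_{i_j}] |0> in F_n |psi>,
  obtained by expanding prod_j (1/sqrt n) sum_k omega^(-j k) a^dagger_k[xi_{i_j}].\<close>
definition fourier_amp :: "nat \<Rightarrow> (nat \<Rightarrow> nat) \<Rightarrow> complex" where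
  "fourier_amp n f = (\<Prod>j<n. complex_of_real (1 / sqrt (real n)) * fourier_phase n j (f j))"

text \<open>Inner product <0| prod_j a_{g j}[xi_{i_j}] prod_k a^dagger_{f k}[xi_{i_k}] |0>
  from the bosonic commutation relations [a_p[xi], a^dagger_q[eta]] = delta_pq <xi|eta>,
  where internal states are elements xi_{i_j} of an orthonormal basis, so
  <xi_a|xi_b> = (if a = b then 1 else 0).\<close>
definition monomial_inner :: "nat \<Rightarrow> (nat \<Rightarrow> 'b) \<Rightarrow> (nat \<Rightarrow> nat) \<Rightarrow> (nat \<Rightarrow> nat) \<Rightarrow> complex" where
  "monomial_inner n i g f =
     (\<Sum>\<sigma> \<in> {\<sigma>. \<sigma> permutes {0..<n}}.
        \<Prod>j<n. (if g j = f (\<sigma> j) then 1 else 0) * (if i j = i (\<sigma> j) then 1 else 0))"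

definition occupation :: "nat \<Rightarrow> (nat \<Rightarrow> nat) \<Rightarrow> nat \<Rightarrow> nat" where
  "occupation n f k = card {j \<in> {0..<n}. f j = k}"

definition patterns :: "nat \<Rightarrow> (nat \<Rightarrow> nat) set" where
  "patterns n = {s \<in> {0..<n} \<rightarrow>\<^sub>E {0..n}. (\<Sum>k<n. s k) = n}"

text \<open>Probability of detecting occupation pattern s (internal-state insensitive detection):
  squared norm of the projection of F_n |psi> onto the subspace with external occupation s.\<close>
definition detect_prob :: "nat \<Rightarrow> (nat \<Rightarrow> 'b) \<Rightarrow> (nat \<Rightarrow> nat) \<Rightarrow> real" where
  "detect_prob n i s = Re (\<Sum>f \<in> {f \<in> assignments n. (\<lambda>k\<in>{0..<n}. occupation n f k) = s}.
       \<Sum>g \<in> {g \<in> assignments n. (\<lambda>k\<in>{0..<n}. occupation n g k) = s}.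
          cnj (fourier_amp n g) * fourier_amp n f * monomial_inner n i g f)"

definition valid_pattern :: "nat \<Rightarrow> (nat \<Rightarrow> nat) \<Rightarrow> bool" where
  "valid_pattern n s \<longleftrightarrow> (\<Sum>k<n. k * s k) mod n = 0"

definition valid_prob :: "nat \<Rightarrow> (nat \<Rightarrow> 'b) \<Rightarrow> real" where
  "valid_prob n i = (\<Sum>s \<in> {s \<in> patterns n. valid_pattern n s}. detect_prob n i s)"

end

theory Submission
  imports Defs
begin

text \<open>
  Expanding the output state in monomials, the assignment \<open>f\<close> of photon \<open>j\<close> to output mode
  \<open>f j\<close> has amplitude \<open>A f = n^(-n/2) \<omega>^(-\<Sum>\<^sub>j j f j)\<close>, and its pattern is valid iff \<open>n\<close> divides
  \<open>\<Sum>\<^sub>j f j\<close>.  Two monomials overlap only if they differ by a permutation \<open>\<sigma>\<close> of the photons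
  that preserves internal states, so the probability of a valid pattern is the sum over this
  stabiliser of the correlations \<open>\<Sum>\<^sub>f cnj (A (f \<circ> \<sigma>)) A f\<close> over valid \<open>f\<close>.  Writing the validity
  indicator as \<open>(1/n) \<Sum>\<^sub>t \<omega>^(t \<Sum>\<^sub>j f j)\<close> turns each correlation into a product of geometric sums.
  Since no other photon shares the internal state of photon \<open>r\<close>, every \<open>\<sigma>\<close> fixes \<open>r\<close>; this kills
  all terms with \<open>t \<noteq> 0\<close>, and the term \<open>t = 0\<close> vanishes unless \<open>\<sigma> = id\<close>, which contributes \<open>1/n\<close>.
\<close>

abbreviation pattern_of :: "nat \<Rightarrow> (nat \<Rightarrow> nat) \<Rightarrow> nat \<Rightarrow> nat" where
  "pattern_of n f \<equiv> \<lambda>k\<in>{0..<n}. occupation n f k"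

abbreviation valid_assignments :: "nat \<Rightarrow> (nat \<Rightarrow> nat) set" where
  "valid_assignments n \<equiv> {f \<in> assignments n. n dvd (\<Sum>j<n. f j)}"

definition unity_root :: "nat \<Rightarrow> int \<Rightarrow> complex" where
  "unity_root n m = cis (2 * pi * of_int m / real n)"

lemma unity_root_0 [simp]: "unity_root n 0 = 1"
  unfolding unity_root_def by simp

lemma unity_root_add: "unity_root n (a + b) = unity_root n a * unity_root n b"
  unfolding unity_root_def by (simp add: cis_mult add_divide_distrib algebra_simps)

lemma unity_root_sum: "unity_root n (\<Sum>j\<in>J. a j) = (\<Prod>j\<in>J. unity_root n (a j))"
  by (induction J rule: infinite_finite_induct) (simp_all add: unity_root_add)

lemma unity_root_power: "unity_root n m ^ k = unity_root n (m * int k)"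
  unfolding unity_root_def Complex.DeMoivre
  by (rule arg_cong[where f = cis]) (simp add: algebra_simps)

lemma cnj_unity_root: "cnj (unity_root n m) = unity_root n (- m)"
  unfolding unity_root_def by (simp add: cis_cnj)

lemma unity_root_eq_1_iff:
  assumes "n > 0"
  shows "unity_root n m = 1 \<longleftrightarrow> int n dvd m"
proof
  assume "unity_root n m = 1"
  then have "cos (2 * pi * of_int m / real n) = 1"
    unfolding unity_root_def by (metis cis.sel(1) one_complex.sel(1))
  then obtain k :: int where "2 * pi * of_int m / real n = real_of_int k * 2 * pi"
    using cos_one_2pi_int by blast
  with assms have "real_of_int m = real_of_int (k * int n)"
    by (simp add: divide_eq_eq algebra_simps)
  then show "int n dvd m"
    by (simp only: of_int_eq_iff) simp
next
  assume "int n dvd m"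
  then obtain k where "m = int n * k" ..
  with assms have "2 * pi * of_int m / real n = 2 * pi * of_int k"
    by simp
  then show "unity_root n m = 1"
    unfolding unity_root_def by simp
qed

lemma sum_unity_root:
  assumes "n > 0"
  shows "(\<Sum>x<n. unity_root n (c * int x)) = (if int n dvd c then of_nat n else 0)"
proof -
  have "(\<Sum>x<n. unity_root n (c * int x)) = (\<Sum>x<n. unity_root n c ^ x)"
    by (simp add: unity_root_power)
  also have "\<dots> = (if unity_root n c = 1 then of_nat n
                     else (1 - unity_root n c ^ n) / (1 - unity_root n c))"
    by (rule sum_gp_strict)
  also have "unity_root n c ^ n = 1"
    using unity_root_eq_1_iff[OF assms] by (simp add: unity_root_power)
  finally show ?thesis
    using unity_root_eq_1_iff[OF assms] by simp
qed

lemma indicator_dvd_eq_sum_unity_root: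
  assumes "n > 0"
  shows "(if int n dvd m then 1 else 0) = (\<Sum>t<n. unity_root n (int t * m)) / of_nat n"
  using sum_unity_root[OF assms, of m] assms by (simp add: mult.commute)

lemma sum_assignments_unity_root:
  "(\<Sum>f\<in>assignments n. unity_root n (\<Sum>j<n. c j * int (f j)))
     = (\<Prod>j<n. if int n dvd c j then of_nat n else 0)"
proof -
  have "(\<Sum>f\<in>assignments n. unity_root n (\<Sum>j<n. c j * int (f j)))
      = (\<Sum>f\<in>{..<n} \<rightarrow>\<^sub>E {..<n}. \<Prod>j\<in>{..<n}. unity_root n (c j * int (f j)))"
    by (simp add: assignments_def atLeast0LessThan unity_root_sum)
  also have "\<dots> = (\<Prod>j<n. \<Sum>x<n. unity_root n (c j * int x))"
    by (rule prod_sum_PiE[symmetric]) auto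
  also have "\<dots> = (\<Prod>j<n. if int n dvd c j then of_nat n else 0)"
    by (rule prod.cong) (auto simp: sum_unity_root)
  finally show ?thesis .
qed

lemma sum_valid_assignments_unity_root:
  assumes "r < n" and "c r = 0"
  shows "(\<Sum>f\<in>valid_assignments n. unity_root n (\<Sum>j<n. c j * int (f j)))
           = (if \<forall>j<n. int n dvd c j then of_nat n ^ (n - 1) else 0)"
proof -
  have n: "n > 0"
    using assms(1) by simp
  define Q where "Q t = (\<Prod>j<n. if int n dvd int t + c j then of_nat n else 0 :: complex)" for t
  have Q_vanishes: "Q t = 0" if "0 < t" "t < n" for t
  proof -
    have "\<not> int n dvd int t"
      using that by (auto dest: zdvd_imp_le)
    then show ?thesis
      unfolding Q_def using assms by (intro prod_zero bexI[of _ r]) auto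
  qed
  have "(\<Sum>f\<in>valid_assignments n. unity_root n (\<Sum>j<n. c j * int (f j)))
      = (\<Sum>f\<in>assignments n. (if int n dvd int (\<Sum>j<n. f j) then 1 else 0)
                                 * unity_root n (\<Sum>j<n. c j * int (f j)))"
    by (auto simp: sum.inter_filter assignments_def finite_PiE simp del: of_nat_sum
        intro!: sum.cong)
  also have "\<dots> = (\<Sum>t<n. \<Sum>f\<in>assignments n.
                       unity_root n (\<Sum>j<n. (int t + c j) * int (f j))) / of_nat n"
    by (simp add: indicator_dvd_eq_sum_unity_root[OF n] sum_divide_distrib sum_distrib_right
          flip: unity_root_add sum.swap[of _ "{..<n}"])
       (simp add: of_nat_sum sum_distrib_left sum.distrib algebra_simps)
  also have "\<dots> = (\<Sum>t<n. Q t) / of_nat n"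
    unfolding Q_def sum_assignments_unity_root ..
  also have "(\<Sum>t<n. Q t) = Q 0"
    using n Q_vanishes by (subst sum.mono_neutral_right[of _ "{0}"]) auto
  finally show ?thesis
    unfolding Q_def using n by (auto simp: power_eq_if intro!: prod_zero)
qed

lemma fourier_amp_eq:
  "fourier_amp n f = of_real (1 / sqrt (real n)) ^ n * unity_root n (- (\<Sum>j<n. int (j * f j)))"
proof -
  have phase: "fourier_phase n j (f j) = unity_root n (- int (j * f j))" for j
    unfolding fourier_phase_def unity_root_def by (rule arg_cong[where f = cis]) simp
  show ?thesis
    by (simp only: fourier_amp_def phase prod.distrib prod_constant card_lessThan
          flip: unity_root_sum sum_negf)
qed

lemma cnj_fourier_amp_permute_mult:
  assumes "\<sigma> permutes {..<n}"
  shows "cnj (fourier_amp n (f \<circ> \<sigma>)) * fourier_amp n f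
           = unity_root n (\<Sum>j<n. (int (inv \<sigma> j) - int j) * int (f j)) / of_nat n ^ n"
proof -
  define c :: complex where "c = of_real (1 / sqrt (real n))"
  have "cnj (fourier_amp n (f \<circ> \<sigma>)) * fourier_amp n f
      = (cnj c ^ n * c ^ n) *
        (unity_root n (\<Sum>j<n. int (j * f (\<sigma> j))) * unity_root n (- (\<Sum>j<n. int (j * f j))))"
    by (simp only: fourier_amp_eq c_def complex_cnj_mult complex_cnj_power cnj_unity_root
          minus_minus o_apply mult_ac)
  also have "cnj c ^ n * c ^ n = 1 / of_nat n ^ n"
    unfolding c_def
    by (simp flip: power_mult_distrib of_real_mult of_real_power add: power_divide)
       (simp only: of_real_power of_real_of_nat_eq)
  also have "(\<Sum>j<n. int (j * f (\<sigma> j))) = (\<Sum>j<n. int (inv \<sigma> j * f j))"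
    using sum.permute[OF assms, of "\<lambda>j. int (inv \<sigma> j * f j)"]
    by (simp add: permutes_inverses(2)[OF assms])
  also have "unity_root n (\<Sum>j<n. int (inv \<sigma> j * f j)) * unity_root n (- (\<Sum>j<n. int (j * f j)))
      = unity_root n (\<Sum>j<n. (int (inv \<sigma> j) - int j) * int (f j))"
    by (simp add: sum_subtractf left_diff_distrib flip: unity_root_add)
  finally show ?thesis
    by (simp add: o_def)
qed

lemma permutes_id_iff_dvd_displacement:
  assumes "\<tau> permutes {..<n}"
  shows "(\<forall>j<n. int n dvd int (\<tau> j) - int j) \<longleftrightarrow> \<tau> = id"
proof
  assume dvd: "\<forall>j<n. int n dvd int (\<tau> j) - int j"
  have "\<tau> j = j" for j
  proof (cases "j < n")
    case True
    then have "\<tau> j < n"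
      using permutes_in_image[OF assms] by simp
    show ?thesis
    proof (rule ccontr)
      assume "\<tau> j \<noteq> j"
      then have "int n \<le> \<bar>int (\<tau> j) - int j\<bar>"
        using dvd True by (metis abs_of_nat dvd_imp_le_int eq_iff_diff_eq_0 of_nat_eq_iff)
      with True \<open>\<tau> j < n\<close> show False
        by linarith
    qed
  next
    case False
    then show ?thesis
      using permutes_not_in[OF assms] by simp
  qed
  then show "\<tau> = id"
    by auto
qed simp

lemma sum_valid_assignments_fourier_correlation:
  assumes "\<sigma> permutes {..<n}" and "r < n" and "\<sigma> r = r"
  shows "(\<Sum>f\<in>valid_assignments n. cnj (fourier_amp n (f \<circ> \<sigma>)) * fourier_amp n f)
           = (if \<sigma> = id then 1 / of_nat n else 0)"
proof -
  have "inv \<sigma> r = r"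
    using assms(1,3) by (simp add: permutes_inv_eq)
  moreover have "(\<forall>j<n. int n dvd int (inv \<sigma> j) - int j) \<longleftrightarrow> \<sigma> = id"
    using permutes_id_iff_dvd_displacement[OF permutes_inv[OF assms(1)]] assms(1)
    by (metis inv_id inv_inv_eq permutes_bij)
  ultimately show ?thesis
    using assms(2)
    by (simp add: cnj_fourier_amp_permute_mult[OF assms(1)] sum_divide_distrib[symmetric]
          sum_valid_assignments_unity_root[where r = r] power_diff)
qed

lemma sum_mult_occupation:
  assumes "f \<in> assignments n"
  shows "(\<Sum>k<n. h k * occupation n f k) = (\<Sum>j<n. h (f j))"
proof -
  have "(\<Sum>j<n. h (f j)) = (\<Sum>k<n. \<Sum>j\<in>{j\<in>{..<n}. f j = k}. h (f j))"
    using assms by (intro sum.group[symmetric]) (auto simp: assignments_def)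
  also have "\<dots> = (\<Sum>k<n. h k * occupation n f k)"
    unfolding occupation_def by (intro sum.cong) auto
  finally show ?thesis ..
qed

lemma pattern_of_in_patterns:
  assumes "f \<in> assignments n"
  shows "pattern_of n f \<in> patterns n"
proof -
  have "occupation n f k \<le> n" for k
    unfolding occupation_def by (rule card_mono[where B = "{0..<n}", simplified]) auto
  moreover have "(\<Sum>k<n. occupation n f k) = n"
    using sum_mult_occupation[OF assms, of "\<lambda>_. 1"] by simp
  ultimately show ?thesis
    unfolding patterns_def by auto
qed

lemma valid_pattern_of_iff:
  assumes "f \<in> assignments n"
  shows "valid_pattern n (pattern_of n f) \<longleftrightarrow> n dvd (\<Sum>j<n. f j)"
  using sum_mult_occupation[OF assms, of id] by (simp add: valid_pattern_def dvd_eq_mod_eq_0)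

lemma occupation_permute:
  assumes "\<sigma> permutes {..<n}"
  shows "occupation n (f \<circ> \<sigma>) k = occupation n f k"
proof -
  have "{j \<in> {0..<n}. f (\<sigma> j) = k} = \<sigma> -` {j \<in> {0..<n}. f j = k}"
    using permutes_in_image[OF assms] by auto
  also have "card \<dots> = card {j \<in> {0..<n}. f j = k}"
    using permutes_bij[OF assms] by (intro card_vimage_inj) (auto simp: bij_def)
  finally show ?thesis
    unfolding occupation_def by simp
qed

lemma sum_valid_patterns_eq_sum_valid_assignments:
  "(\<Sum>s\<in>{s\<in>patterns n. valid_pattern n s}. \<Sum>f\<in>{f\<in>assignments n. pattern_of n f = s}. h f)
     = (\<Sum>f\<in>valid_assignments n. h f)"
proof -
  have "finite (patterns n)"
    unfolding patterns_def
    by (rule finite_subset[of _ "{0..<n} \<rightarrow>\<^sub>E {0..n}"]) (auto simp: finite_PiE)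
  then have "(\<Sum>f\<in>valid_assignments n. h f)
      = (\<Sum>s\<in>{s\<in>patterns n. valid_pattern n s}.
           \<Sum>f | f \<in> valid_assignments n \<and> pattern_of n f = s. h f)"
    by (intro sum.group[symmetric])
       (auto simp: assignments_def finite_PiE pattern_of_in_patterns valid_pattern_of_iff)
  also have "\<dots> = (\<Sum>s\<in>{s\<in>patterns n. valid_pattern n s}.
                       \<Sum>f\<in>{f\<in>assignments n. pattern_of n f = s}. h f)"
    by (intro sum.cong refl arg_cong[where f = "\<lambda>A. sum h A"]) (auto simp: valid_pattern_of_iff)
  finally show ?thesis ..
qed

lemma prod_of_bool:
  assumes "finite A"
  shows "(\<Prod>j\<in>A. of_bool (P j)) = (of_bool (\<forall>j\<in>A. P j) :: 'a::comm_semiring_1)"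
  using assms by (induction A rule: finite_induct) auto

lemma monomial_inner_eq:
  "monomial_inner n i g f
     = (\<Sum>\<sigma> | \<sigma> permutes {..<n}. of_bool (\<forall>j<n. g j = f (\<sigma> j) \<and> i j = i (\<sigma> j)))"
proof -
  have "(if P then 1 else 0) * (if Q then 1 else 0) = (of_bool (P \<and> Q) :: complex)" for P Q
    by simp
  then show ?thesis
    by (simp add: monomial_inner_def prod_of_bool atLeast0LessThan Ball_def)
qed

lemma monomial_inner_eq_0:
  assumes "pattern_of n g \<noteq> pattern_of n f"
  shows "monomial_inner n i g f = 0"
proof -
  have "of_bool (\<forall>j<n. g j = f (\<sigma> j) \<and> i j = i (\<sigma> j)) = (0 :: complex)"
    if \<sigma>: "\<sigma> permutes {..<n}" for \<sigma>
  proof (rule ccontr)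
    assume "of_bool (\<forall>j<n. g j = f (\<sigma> j) \<and> i j = i (\<sigma> j)) \<noteq> (0 :: complex)"
    then have "\<forall>j<n. g j = f (\<sigma> j) \<and> i j = i (\<sigma> j)"
      "occupation n g k = occupation n (f \<circ> \<sigma>) k" for k
      unfolding occupation_def by (auto intro!: arg_cong[where f = card])
    then have "pattern_of n g = pattern_of n f"
      using occupation_permute[OF \<sigma>] by simp
    with assms show False ..
  qed
  then show ?thesis
    unfolding monomial_inner_eq by (intro sum.neutral) simp
qed

lemma sum_assignments_matching_permute:
  assumes "f \<in> assignments n" and "\<sigma> permutes {..<n}"
  shows "(\<Sum>g\<in>assignments n. of_bool (\<forall>j<n. g j = f (\<sigma> j) \<and> i j = i (\<sigma> j)) * cnj (fourier_amp n g))
           = of_bool (\<forall>j<n. i j = i (\<sigma> j)) * cnj (fourier_amp n (f \<circ> \<sigma>))"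
proof -
  define g0 where "g0 = restrict (f \<circ> \<sigma>) {0..<n}"
  have g0: "g0 \<in> assignments n"
    using assms permutes_in_image[OF assms(2)] by (auto simp: g0_def assignments_def)
  have match: "(\<forall>j<n. g j = f (\<sigma> j) \<and> i j = i (\<sigma> j)) \<longleftrightarrow> g = g0 \<and> (\<forall>j<n. i j = i (\<sigma> j))"
    if "g \<in> assignments n" for g
    using that by (auto simp: g0_def assignments_def PiE_iff extensional_def)
  have "of_bool (\<forall>j<n. g j = f (\<sigma> j) \<and> i j = i (\<sigma> j)) * cnj (fourier_amp n g)
      = (if g = g0 then of_bool (\<forall>j<n. i j = i (\<sigma> j)) * cnj (fourier_amp n g) else 0)"
    if "g \<in> assignments n" for g
    by (simp add: match[OF that])
  then have "(\<Sum>g\<in>assignments n.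
                of_bool (\<forall>j<n. g j = f (\<sigma> j) \<and> i j = i (\<sigma> j)) * cnj (fourier_amp n g))
      = (\<Sum>g\<in>assignments n.
           if g = g0 then of_bool (\<forall>j<n. i j = i (\<sigma> j)) * cnj (fourier_amp n g) else 0)"
    by (intro sum.cong) simp_all
  also have "\<dots> = of_bool (\<forall>j<n. i j = i (\<sigma> j)) * cnj (fourier_amp n g0)"
    using g0 by (simp add: sum.delta' assignments_def finite_PiE)
  also have "fourier_amp n g0 = fourier_amp n (f \<circ> \<sigma>)"
    unfolding g0_def fourier_amp_def by (intro prod.cong) auto
  finally show ?thesis .
qed

lemma sum_monomial_inner:
  assumes "f \<in> assignments n"
  shows "(\<Sum>g\<in>assignments n. cnj (fourier_amp n g) * fourier_amp n f * monomial_inner n i g f)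
           = (\<Sum>\<sigma> | \<sigma> permutes {..<n} \<and> (\<forall>j<n. i j = i (\<sigma> j)).
                cnj (fourier_amp n (f \<circ> \<sigma>)) * fourier_amp n f)"
proof -
  have "(\<Sum>g\<in>assignments n. cnj (fourier_amp n g) * fourier_amp n f * monomial_inner n i g f)
      = (\<Sum>\<sigma> | \<sigma> permutes {..<n}.
           (\<Sum>g\<in>assignments n.
              of_bool (\<forall>j<n. g j = f (\<sigma> j) \<and> i j = i (\<sigma> j)) * cnj (fourier_amp n g))
           * fourier_amp n f)"
    by (simp add: monomial_inner_eq sum_distrib_left sum_distrib_right mult_ac
        sum.swap[of _ "assignments n"])
  also have "\<dots> = (\<Sum>\<sigma> | \<sigma> permutes {..<n}.
                  of_bool (\<forall>j<n. i j = i (\<sigma> j)) * (cnj (fourier_amp n (f \<circ> \<sigma>)) * fourier_amp n f))"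
    using assms by (intro sum.cong refl) (simp add: sum_assignments_matching_permute)
  also have "\<dots> = (\<Sum>\<sigma> | \<sigma> permutes {..<n} \<and> (\<forall>j<n. i j = i (\<sigma> j)).
                cnj (fourier_amp n (f \<circ> \<sigma>)) * fourier_amp n f)"
    by (simp add: sum.inter_filter[symmetric] finite_permutations Collect_conj_eq)
  finally show ?thesis .
qed

lemma sum_same_pattern_monomial_inner:
  assumes "f \<in> assignments n"
  shows "(\<Sum>g\<in>{g\<in>assignments n. pattern_of n g = pattern_of n f}.
             cnj (fourier_amp n g) * fourier_amp n f * monomial_inner n i g f)
           = (\<Sum>g\<in>assignments n. cnj (fourier_amp n g) * fourier_amp n f * monomial_inner n i g f)"
  by (intro sum.mono_neutral_left) (auto simp: assignments_def finite_PiE monomial_inner_eq_0)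

theorem theorem5:
  fixes n r :: nat and i :: "nat \<Rightarrow> 'b"
  assumes "r < n"
    and "\<forall>j<n. j \<noteq> r \<longrightarrow> i j \<noteq> i r"
  shows "valid_prob n i = 1 / real n"
proof -
  let ?S = "{\<sigma>. \<sigma> permutes {..<n} \<and> (\<forall>j<n. i j = i (\<sigma> j))}"
  let ?Y = "\<lambda>\<sigma> f. cnj (fourier_amp n (f \<circ> \<sigma>)) * fourier_amp n f"
  have fixes_r: "\<sigma> r = r" if "\<sigma> \<in> ?S" for \<sigma>
    using that assms permutes_in_image[of \<sigma> "{..<n}" r] by auto
  have "valid_prob n i
      = Re (\<Sum>s\<in>{s\<in>patterns n. valid_pattern n s}. \<Sum>f\<in>{f\<in>assignments n. pattern_of n f = s}.
              \<Sum>g\<in>{g\<in>assignments n. pattern_of n g = pattern_of n f}.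
                cnj (fourier_amp n g) * fourier_amp n f * monomial_inner n i g f)"
    unfolding valid_prob_def detect_prob_def Re_sum by (intro sum.cong refl) auto
  also have "\<dots> = Re (\<Sum>s\<in>{s\<in>patterns n. valid_pattern n s}. \<Sum>f\<in>{f\<in>assignments n. pattern_of n f = s}.
                       \<Sum>\<sigma>\<in>?S. ?Y \<sigma> f)"
    by (intro arg_cong[where f = Re] sum.cong[OF refl])
       (simp add: sum_same_pattern_monomial_inner sum_monomial_inner)
  also have "\<dots> = Re (\<Sum>\<sigma>\<in>?S. \<Sum>f\<in>valid_assignments n. ?Y \<sigma> f)"
    by (simp only: sum_valid_patterns_eq_sum_valid_assignments sum.swap[of _ ?S])
  also have "\<dots> = Re (\<Sum>\<sigma>\<in>?S. if \<sigma> = id then 1 / of_nat n else 0)"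
    using assms(1) fixes_r
    by (intro arg_cong[where f = Re] sum.cong[OF refl])
       (simp add: sum_valid_assignments_fourier_correlation)
  also have "\<dots> = 1 / real n"
    by (simp add: sum.delta' finite_permutations permutes_id)
  finally show ?thesis .
qed

end
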